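(* Let $\mathcal{S}$ be a state space, let $\mathsf{N}^{(1)},\ldots,\mathsf{N}^{(l)}$ be measurements on $\mathcal{S}$ with common finite outcome set $\Omega_1$, let $(p_i)_{i=1}^l$ be a probability distribution, and let $\mathsf{M}^{(2)},\ldots,\mathsf{M}^{(k)}$ be measurements on $\mathcal{S}$ with finite outcome sets $\Omega_2,\ldots,\Omega_k$. Then $$\bar P\Big(\sum_{i=1}^l p_i\mathsf{N}^{(i)},\mathsf{M}^{(2)},\ldots,\mathsf{M}^{(k)}\Big)\le\sum_{i=1}^l p_i\,\bar P(\mathsf{N}^{(i)},\mathsf{M}^{(2)},\ldots,\mathsf{M}^{(k)})\le\max_j\bar P(\mathsf{N}^{(j)},\mathsf{M}^{(2)},\ldots,\mathsf{M}^{(k)}).$$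
   Context: General probabilistic theory setting: a state space $\mathcal{S}$ is a compact convex subset of a finite-dimensional real vector space, embedded as a base of a closed generating proper cone in a vector space $V$, with unit effect $u$. Effects are linear functionals $e$ on $V$ with $0\le e\le1$ on $\mathcal{S}$; $\|f\|=\max_{s\in\mathcal{S}}|f(s)|$. A measurement with finite outcome set $\Omega$ is a map $x\mapsto\mathsf{M}_x$ to effects with $\sum_x\mathsf{M}_x=u$; the mixture $\sum_ip_i\mathsf{N}^{(i)}$ has effects $\sum_ip_i\mathsf{N}^{(i)}_x$. For measurements $\mathsf{M}^{(1)},\ldots,\mathsf{M}^{(k)}$ with outcome sets of sizes $m_1,\ldots,m_k$, the random access test success probability is $\bar P(\mathsf{M}^{(1)},\ldots,\mathsf{M}^{(k)})=\frac{1}{k\,m_1\cdots m_k}\sum_{(x_1,\ldots,x_k)}\|\mathsf{M}^{(1)}_{x_1}+\cdots+\mathsf{M}^{(k)}_{x_k}\|$. *)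

theory Defs
  imports "HOL-Analysis.Analysis"
begin

text \<open>The state space S is a compact convex set which is a base
of the closed, generating, proper cone (cone hull S), with unit effect u (u = 1 on S).\<close>

definition gpt_state_space :: "'v::euclidean_space set \<Rightarrow> ('v \<Rightarrow> real) \<Rightarrow> bool" where
  "gpt_state_space S u \<longleftrightarrow>
     S \<noteq> {} \<and> compact S \<and> convex S \<and> linear u \<and> (\<forall>s\<in>S. u s = 1) \<and>
     closed (cone hull S) \<and> span S = UNIV \<and>
     cone hull S \<inter> uminus ` (cone hull S) = {0}"

definition gpt_effect :: "'v::euclidean_space set \<Rightarrow> ('v \<Rightarrow> real) \<Rightarrow> bool" where
  "gpt_effect S e \<longleftrightarrow> linear e \<and> (\<forall>s\<in>S. 0 \<le> e s \<and> e s \<le> 1)"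

text \<open>\<open>\<parallel>f\<parallel> = max over S of |f s|\<close> (attained since S compact, f continuous).\<close>
definition gpt_norm :: "'v::euclidean_space set \<Rightarrow> ('v \<Rightarrow> real) \<Rightarrow> real" where
  "gpt_norm S f = (SUP s\<in>S. \<bar>f s\<bar>)"

definition gpt_measurement ::
  "'v::euclidean_space set \<Rightarrow> ('v \<Rightarrow> real) \<Rightarrow> 'o set \<Rightarrow> ('o \<Rightarrow> 'v \<Rightarrow> real) \<Rightarrow> bool" where
  "gpt_measurement S u \<Omega> M \<longleftrightarrow> finite \<Omega> \<and> \<Omega> \<noteq> {} \<and> (\<forall>x\<in>\<Omega>. gpt_effect S (M x)) \<and>
     (\<forall>v. (\<Sum>x\<in>\<Omega>. M x v) = u v)"

definition gpt_mixture :: "nat \<Rightarrow> (nat \<Rightarrow> real) \<Rightarrow> (nat \<Rightarrow> 'o \<Rightarrow> 'v \<Rightarrow> real) \<Rightarrow> 'o \<Rightarrow> 'v \<Rightarrow> real" where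
  "gpt_mixture l p N = (\<lambda>x v. \<Sum>i<l. p i * N i x v)"

definition rat_success ::
  "'v::euclidean_space set \<Rightarrow> nat \<Rightarrow> (nat \<Rightarrow> 'o set) \<Rightarrow> (nat \<Rightarrow> 'o \<Rightarrow> 'v \<Rightarrow> real) \<Rightarrow> real" where
  "rat_success S k \<Omega> M =
     (\<Sum>x\<in>PiE {..<k} \<Omega>. gpt_norm S (\<lambda>s. \<Sum>j<k. M j (x j) s))
       / (real k * (\<Prod>j<k. real (card (\<Omega> j))))"

end

theory Submission
  imports Defs
begin

text \<open>The success probability is a normalised sum of norms of effect sums. Every such effect
sum is affine in the first measurement, and the norm, being a supremum of absolute values, is
convex; hence the success probability is convex in the first measurement. A convex
combination of numbers never exceeds their maximum.\<close>

lemma gpt_norm_weighted_sum_le: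
  fixes S :: "'v::euclidean_space set" and g :: "nat \<Rightarrow> 'v \<Rightarrow> real"
  assumes "S \<noteq> {}" and "\<And>i. i < l \<Longrightarrow> p i \<ge> 0"
    and "\<And>i. i < l \<Longrightarrow> bdd_above ((\<lambda>s. \<bar>g i s\<bar>) ` S)"
  shows "gpt_norm S (\<lambda>s. \<Sum>i<l. p i * g i s) \<le> (\<Sum>i<l. p i * gpt_norm S (g i))"
  unfolding gpt_norm_def
proof (rule cSUP_least[OF assms(1)])
  fix s assume s: "s \<in> S"
  have "\<bar>\<Sum>i<l. p i * g i s\<bar> \<le> (\<Sum>i<l. p i * \<bar>g i s\<bar>)"
    using sum_abs[of "\<lambda>i. p i * g i s" "{..<l}"] assms(2) by (simp add: abs_mult)
  also have "\<dots> \<le> (\<Sum>i<l. p i * (SUP s\<in>S. \<bar>g i s\<bar>))"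
    using assms(2,3) cSUP_upper[OF s] by (intro sum_mono mult_left_mono) auto
  finally show "\<bar>\<Sum>i<l. p i * g i s\<bar> \<le> (\<Sum>i<l. p i * (SUP s\<in>S. \<bar>g i s\<bar>))" .
qed

lemma gpt_measurement_effect_bounds:
  assumes "gpt_measurement S u \<Omega> M" and "x \<in> \<Omega>" and "s \<in> S"
  shows "0 \<le> M x s" and "M x s \<le> 1"
  using assms by (auto simp: gpt_measurement_def gpt_effect_def)

lemma abs_sum_outcome_effects_le:
  assumes "\<And>j. j < k \<Longrightarrow> gpt_measurement S u (\<Omega> j) (M j)"
    and "x \<in> PiE {..<k} \<Omega>" and "s \<in> S"
  shows "\<bar>\<Sum>j<k. M j (x j) s\<bar> \<le> real k"
proof -
  have "\<bar>\<Sum>j<k. M j (x j) s\<bar> \<le> (\<Sum>j<k. \<bar>M j (x j) s\<bar>)" by (rule sum_abs)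
  also have "\<dots> \<le> (\<Sum>j<k. 1)"
    using assms gpt_measurement_effect_bounds by (intro sum_mono) (fastforce simp: PiE_iff)
  finally show ?thesis by simp
qed

lemma sum_outcome_effects_mixture:
  assumes "(\<Sum>i<l. p i) = 1"
  shows "(\<Sum>j<k. (M(0 := gpt_mixture l p N)) j (x j) s)
       = (\<Sum>i<l. p i * (\<Sum>j<k. (M(0 := N i)) j (x j) s))"
proof -
  have "(M(0 := gpt_mixture l p N)) j (x j) s = (\<Sum>i<l. p i * (M(0 := N i)) j (x j) s)" for j
    using assms by (cases "j = 0") (simp_all add: gpt_mixture_def sum_distrib_right[symmetric])
  then show ?thesis by (simp add: sum_distrib_left sum.swap[of _ "{..<l}"])
qed

lemma rat_success_mixture_le:
  assumes "S \<noteq> {}"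
    and "\<And>i. i < l \<Longrightarrow> gpt_measurement S u (\<Omega> 0) (N i)"
    and "\<And>i. i < l \<Longrightarrow> p i \<ge> 0" and "(\<Sum>i<l. p i) = 1"
    and "\<And>j. 1 \<le> j \<Longrightarrow> j < k \<Longrightarrow> gpt_measurement S u (\<Omega> j) (M j)"
  shows "rat_success S k \<Omega> (M(0 := gpt_mixture l p N))
           \<le> (\<Sum>i<l. p i * rat_success S k \<Omega> (M(0 := N i)))"
proof -
  define D where "D = real k * (\<Prod>j<k. real (card (\<Omega> j)))"
  define G where "G i x s = (\<Sum>j<k. (M(0 := N i)) j (x j) s)" for i x s
  have "gpt_measurement S u (\<Omega> j) ((M(0 := N i)) j)" if "i < l" "j < k" for i j
    using that assms(2,5) by (cases "j = 0") auto
  then have G_bdd: "bdd_above ((\<lambda>s. \<bar>G i x s\<bar>) ` S)"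
    if "i < l" "x \<in> PiE {..<k} \<Omega>" for i x
    unfolding G_def using that abs_sum_outcome_effects_le by (intro bdd_aboveI2) blast
  have "(\<Sum>x\<in>PiE {..<k} \<Omega>. gpt_norm S (\<lambda>s. \<Sum>j<k. (M(0 := gpt_mixture l p N)) j (x j) s))
      \<le> (\<Sum>x\<in>PiE {..<k} \<Omega>. \<Sum>i<l. p i * gpt_norm S (G i x))"
    unfolding sum_outcome_effects_mixture[OF assms(4)] G_def[symmetric]
    using assms(1,3) G_bdd by (intro sum_mono gpt_norm_weighted_sum_le) auto
  also have "\<dots> = (\<Sum>i<l. p i * (\<Sum>x\<in>PiE {..<k} \<Omega>. gpt_norm S (G i x)))"
    by (simp add: sum_distrib_left sum.swap[of _ "{..<l}"])
  finally have "rat_success S k \<Omega> (M(0 := gpt_mixture l p N))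
      \<le> (\<Sum>i<l. p i * (\<Sum>x\<in>PiE {..<k} \<Omega>. gpt_norm S (G i x))) / D"
    unfolding rat_success_def D_def[symmetric] by (rule divide_right_mono) (simp add: D_def prod_nonneg)
  also have "\<dots> = (\<Sum>i<l. p i * rat_success S k \<Omega> (M(0 := N i)))"
    unfolding rat_success_def D_def[symmetric] G_def by (simp add: sum_divide_distrib[symmetric])
  finally show ?thesis .
qed

lemma convex_combination_le_Max:
  fixes f p :: "nat \<Rightarrow> real"
  assumes "\<And>i. i < l \<Longrightarrow> p i \<ge> 0" and "(\<Sum>i<l. p i) = 1"
  shows "(\<Sum>i<l. p i * f i) \<le> Max (f ` {..<l})"
proof -
  have "(\<Sum>i<l. p i * f i) \<le> (\<Sum>i<l. p i * Max (f ` {..<l}))"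
    using assms(1) by (intro sum_mono mult_left_mono Max_ge) auto
  also have "\<dots> = Max (f ` {..<l})"
    using assms(2) by (simp add: sum_distrib_right[symmetric])
  finally show ?thesis .
qed

theorem mainTheorem5:
  fixes S :: "'v::euclidean_space set" and u :: "'v \<Rightarrow> real"
    and k l :: nat and \<Omega> :: "nat \<Rightarrow> 'o set"
    and N :: "nat \<Rightarrow> 'o \<Rightarrow> 'v \<Rightarrow> real" and M :: "nat \<Rightarrow> 'o \<Rightarrow> 'v \<Rightarrow> real"
    and p :: "nat \<Rightarrow> real"
  assumes "gpt_state_space S u"
    and "k \<ge> 1" and "l \<ge> 1"
    and "\<And>i. i < l \<Longrightarrow> gpt_measurement S u (\<Omega> 0) (N i)"
    and "\<And>i. i < l \<Longrightarrow> p i \<ge> 0" and "(\<Sum>i<l. p i) = 1"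
    and "\<And>j. 1 \<le> j \<Longrightarrow> j < k \<Longrightarrow> gpt_measurement S u (\<Omega> j) (M j)"
  shows "rat_success S k \<Omega> (M(0 := gpt_mixture l p N))
           \<le> (\<Sum>i<l. p i * rat_success S k \<Omega> (M(0 := N i)))
       \<and> (\<Sum>i<l. p i * rat_success S k \<Omega> (M(0 := N i)))
           \<le> Max ((\<lambda>j. rat_success S k \<Omega> (M(0 := N j))) ` {..<l})"
proof
  have "S \<noteq> {}" using assms(1) by (simp add: gpt_state_space_def)
  then show "rat_success S k \<Omega> (M(0 := gpt_mixture l p N))
           \<le> (\<Sum>i<l. p i * rat_success S k \<Omega> (M(0 := N i)))"
    using assms(4-7) by (rule rat_success_mixture_le)
  show "(\<Sum>i<l. p i * rat_success S k \<Omega> (M(0 := N i)))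
           \<le> Max ((\<lambda>j. rat_success S k \<Omega> (M(0 := N j))) ` {..<l})"
    using assms(5,6) by (rule convex_combination_le_Max)
qed

end
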